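(* Let $\mathcal H_\mathrm{S},\mathcal H_\mathrm{M},\mathcal H_\mathrm{R}$ be finite-dimensional Hilbert spaces, $\rho^\mathrm{i}_\mathrm{SM}$ any density operator on $\mathcal H_\mathrm{S}\otimes\mathcal H_\mathrm{M}$, $\mathcal H_\mathrm{R}$ a Hermitian reservoir Hamiltonian, $\beta>0$, $\rho^\mathrm{i}_\mathrm{R}=e^{-\beta\mathcal H_\mathrm{R}}/\mathrm{Tr}\,e^{-\beta\mathcal H_\mathrm{R}}$, $U_\mathrm{SR}$ a unitary on $\mathcal H_\mathrm{S}\otimes\mathcal H_\mathrm{R}$ and $\rho^\mathrm{f}_\mathrm{SMR}=(U_\mathrm{SR}\otimes 1_\mathrm{M})(\rho^\mathrm{i}_\mathrm{SM}\otimes\rho^\mathrm{i}_\mathrm{R})(U_\mathrm{SR}\otimes 1_\mathrm{M})^\dagger$. With $Q_\mathrm{R}=\mathrm{Tr}[(\rho^\mathrm{f}_\mathrm{R}-\rho^\mathrm{i}_\mathrm{R})\mathcal H_\mathrm{R}]$, $\Sigma_\mathrm{S}=\mathcal S(\rho^\mathrm{f}_\mathrm{S})-\mathcal S(\rho^\mathrm{i}_\mathrm{S})+\beta Q_\mathrm{R}$, $\Sigma_\mathrm{S|M}=\mathcal S_\mathrm{S|M}(\mathrm f)-\mathcal S_\mathrm{S|M}(\mathrm i)+\beta Q_\mathrm{R}$ and $\Sigma_\mathrm{I}=\Sigma_\mathrm{S|M}-\Sigma_\mathrm{S}$, one has $$\Sigma_\mathrm{I}=\mathcal I_\mathrm{M:R|S}(\mathrm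 f):=\mathcal S(\rho^\mathrm{f}_\mathrm{SR})+\mathcal S(\rho^\mathrm{f}_\mathrm{SM})-\mathcal S(\rho^\mathrm{f}_\mathrm{S})-\mathcal S(\rho^\mathrm{f}_\mathrm{SMR}).$$
   Context: $\mathcal S(\rho)=-\mathrm{Tr}\,\rho\ln\rho$ is the von Neumann entropy; $\mathcal S_\mathrm{S|M}=\mathcal S(\rho_\mathrm{SM})-\mathcal S(\rho_\mathrm{M})$ evaluated on the reduced states at the indicated time; reduced states are partial traces of the global state. *)

theory Defs
  imports Complex_Main "Jordan_Normal_Form.Matrix" "Jordan_Normal_Form.Char_Poly"
    "Jordan_Normal_Form.Schur_Decomposition"
    "HOL-Computational_Algebra.Fundamental_Theorem_Algebra"
begin

text \<open>Finite-dimensional Hilbert spaces are modelled as C^d with complex square matrices.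
  Tensor index conventions: for S (dim a), M (dim b), R (dim c) the basis vector
  |s,m,r> of S(x)M(x)R has index s*(b*c)+m*c+r; |s,m> of S(x)M has index s*b+m;
  |s,r> of S(x)R has index s*c+r.\<close>

definition mtrace :: "complex mat \<Rightarrow> complex" where
  "mtrace A = (\<Sum>i<dim_row A. A $$ (i, i))"

definition hermitian_mat :: "complex mat \<Rightarrow> bool" where
  "hermitian_mat A \<longleftrightarrow> square_mat A \<and> mat_adjoint A = A"

definition unitary_mat :: "complex mat \<Rightarrow> bool" where
  "unitary_mat U \<longleftrightarrow> square_mat U \<and> U * mat_adjoint U = 1\<^sub>m (dim_row U)
      \<and> mat_adjoint U * U = 1\<^sub>m (dim_row U)"

definition psd_mat :: "complex mat \<Rightarrow> bool" where
  "psd_mat A \<longleftrightarrow> hermitian_mat A \<and>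
     (\<forall>v :: nat \<Rightarrow> complex.
        0 \<le> Re (\<Sum>i<dim_row A. \<Sum>j<dim_row A. cnj (v i) * A $$ (i, j) * v j))"

definition density_op :: "nat \<Rightarrow> complex mat \<Rightarrow> bool" where
  "density_op n \<rho> \<longleftrightarrow> \<rho> \<in> carrier_mat n n \<and> psd_mat \<rho> \<and> mtrace \<rho> = 1"

definition kron :: "complex mat \<Rightarrow> complex mat \<Rightarrow> complex mat" where
  "kron A B = mat (dim_row A * dim_row B) (dim_col A * dim_col B)
     (\<lambda>(i, j). A $$ (i div dim_row B, j div dim_col B) * B $$ (i mod dim_row B, j mod dim_col B))"

definition exp_mat :: "complex mat \<Rightarrow> complex mat" where
  "exp_mat A = mat (dim_row A) (dim_row A)
     (\<lambda>(i, j). \<Sum>k. (A ^\<^sub>m k) $$ (i, j) / of_nat (fact k))"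

definition gibbs_state :: "real \<Rightarrow> complex mat \<Rightarrow> complex mat" where
  "gibbs_state \<beta> H = (1 / mtrace (exp_mat ((- complex_of_real \<beta>) \<cdot>\<^sub>m H)))
                        \<cdot>\<^sub>m exp_mat ((- complex_of_real \<beta>) \<cdot>\<^sub>m H)"

text \<open>von Neumann entropy  S(rho) = - Tr rho ln rho = - sum over the eigenvalues lambda
  (with algebraic multiplicity, i.e. the roots of the characteristic polynomial) of
  lambda ln lambda, with the convention 0 ln 0 = 0 (which holds since ln 0 = 0 in Isabelle).\<close>
definition vn_entropy :: "complex mat \<Rightarrow> real" where
  "vn_entropy \<rho> = - (\<Sum>x\<in>#proots (char_poly \<rho>). Re x * ln (Re x))"

text \<open>U_SR (x) 1_M acting on S(x)M(x)R (dims a, b, c).\<close>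
definition ext_SR :: "nat \<Rightarrow> nat \<Rightarrow> nat \<Rightarrow> complex mat \<Rightarrow> complex mat" where
  "ext_SR a b c U = mat (a*b*c) (a*b*c) (\<lambda>(i, j).
      if (i div c) mod b = (j div c) mod b
      then U $$ ((i div (b*c)) * c + i mod c, (j div (b*c)) * c + j mod c)
      else 0)"

definition red_SM :: "nat \<Rightarrow> nat \<Rightarrow> nat \<Rightarrow> complex mat \<Rightarrow> complex mat" where
  "red_SM a b c \<rho> = mat (a*b) (a*b) (\<lambda>(i, j). \<Sum>r<c. \<rho> $$ (i*c + r, j*c + r))"

definition red_SR :: "nat \<Rightarrow> nat \<Rightarrow> nat \<Rightarrow> complex mat \<Rightarrow> complex mat" where
  "red_SR a b c \<rho> = mat (a*c) (a*c) (\<lambda>(i, j).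
      \<Sum>m<b. \<rho> $$ ((i div c)*(b*c) + m*c + i mod c, (j div c)*(b*c) + m*c + j mod c))"

definition red_S :: "nat \<Rightarrow> nat \<Rightarrow> nat \<Rightarrow> complex mat \<Rightarrow> complex mat" where
  "red_S a b c \<rho> = mat a a (\<lambda>(s, s'). \<Sum>k<b*c. \<rho> $$ (s*(b*c) + k, s'*(b*c) + k))"

definition red_M :: "nat \<Rightarrow> nat \<Rightarrow> nat \<Rightarrow> complex mat \<Rightarrow> complex mat" where
  "red_M a b c \<rho> = mat b b (\<lambda>(m, m').
      \<Sum>s<a. \<Sum>r<c. \<rho> $$ (s*(b*c) + m*c + r, s*(b*c) + m'*c + r))"

definition red_R :: "nat \<Rightarrow> nat \<Rightarrow> nat \<Rightarrow> complex mat \<Rightarrow> complex mat" where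
  "red_R a b c \<rho> = mat c c (\<lambda>(r, r'). \<Sum>k<a*b. \<rho> $$ (k*c + r, k*c + r'))"

end

theory Submission
  imports Defs
begin

(* The heat terms cancel in Sigma_I, and the reduced state on M does not change because U_SR acts
   on S (x) R only; what remains is an identity between entropies. Unitary conjugation preserves
   the spectrum, so S(rho_f) = S(rho_i) and S(rho_f_SR) = S(rho_i_SR). The initial state is the
   product rho_SM (x) rho_R, whose SR-marginal is rho_S (x) rho_R, and the von Neumann entropy is
   additive on Kronecker products of trace-one matrices with real spectra: triangularizing both
   factors (Schur), the Kronecker product of the triangular forms is triangular with the products
   of eigenvalues on its diagonal. Real spectra come from hermiticity for rho_SM and rho_S, and
   for the Gibbs state from a triangularization of H pushed through the exponential series. *)

lemma mat_adjoint_index [simp]: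
  "i < dim_col A \<Longrightarrow> j < dim_row A \<Longrightarrow> mat_adjoint A $$ (i, j) = cnj (A $$ (j, i))"
  by (simp add: mat_adjoint_def mat_of_rows_def)

lemma mat_adjoint_dim [simp]:
  "dim_row (mat_adjoint A) = dim_col A" "dim_col (mat_adjoint A) = dim_row A"
  by (simp_all add: mat_adjoint_def mat_of_rows_def)

lemma mat_adjoint_carrier: "A \<in> carrier_mat n m \<Longrightarrow> mat_adjoint A \<in> carrier_mat m n"
  unfolding carrier_mat_def by simp

lemma sum_lessThan_mult_nat:
  "(\<Sum>k<a * c. f k) = (\<Sum>s<a. \<Sum>r<c. f (s * c + r :: nat))"
proof -
  have "sum f {s * c..<s * c + c} = (\<Sum>r<c. f (s * c + r))" for s
    using sum.shift_bounds_nat_ivl[of f 0 "s * c" c] by (simp add: lessThan_atLeast0 add.commute)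
  then show ?thesis by (simp add: sum.nat_group[symmetric])
qed

lemma mult_add_less_mult:
  fixes i r n m :: nat
  assumes "i < n" "r < m"
  shows "i * m + r < n * m"
proof -
  have "i * m + r < Suc i * m" using assms(2) by simp
  also have "\<dots> \<le> n * m" using assms(1) by (intro mult_le_mono1) simp
  finally show ?thesis .
qed

lemma mult_mat_index_sum:
  "A \<in> carrier_mat n m \<Longrightarrow> B \<in> carrier_mat m p \<Longrightarrow> i < n \<Longrightarrow> j < p \<Longrightarrow>
   (A * B) $$ (i, j) = (\<Sum>k<m. A $$ (i, k) * B $$ (k, j))"
  by (simp add: scalar_prod_def lessThan_atLeast0)

lemma triple_mult_index:
  assumes "P \<in> carrier_mat n n" "Y \<in> carrier_mat n n" "Q \<in> carrier_mat n n" "i < n" "j < n"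
  shows "(P * Y * Q) $$ (i, j) = (\<Sum>a<n. \<Sum>b<n. P $$ (i, a) * Y $$ (a, b) * Q $$ (b, j))"
  using assms by (simp add: scalar_prod_def lessThan_atLeast0 sum_distrib_left mult.assoc)

lemma smult_one_mat [simp]: "(1 :: 'a :: semiring_1) \<cdot>\<^sub>m A = A"
  by (rule eq_matI) simp_all

lemma mtrace_mult_commute:
  assumes "A \<in> carrier_mat n m" "B \<in> carrier_mat m n"
  shows "mtrace (A * B) = mtrace (B * A)"
proof -
  have "mtrace (A * B) = (\<Sum>i<n. \<Sum>k<m. A $$ (i, k) * B $$ (k, i))"
    using assms by (simp add: mtrace_def scalar_prod_def lessThan_atLeast0)
  also have "\<dots> = (\<Sum>k<m. \<Sum>i<n. B $$ (k, i) * A $$ (i, k))"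
    by (subst sum.swap) (simp add: mult.commute)
  also have "\<dots> = mtrace (B * A)"
    using assms by (simp add: mtrace_def scalar_prod_def lessThan_atLeast0)
  finally show ?thesis .
qed

lemma mtrace_similar:
  assumes "similar_mat_wit A T P Q"
  shows "mtrace A = mtrace T"
proof -
  obtain n where c: "A \<in> carrier_mat n n" "T \<in> carrier_mat n n" "P \<in> carrier_mat n n" "Q \<in> carrier_mat n n"
    and QP: "Q * P = 1\<^sub>m n" and A: "A = P * T * Q"
    using similar_mat_witD[OF refl assms] by blast
  have "mtrace A = mtrace (P * (T * Q))"
    using A c by (simp add: assoc_mult_mat[of P n n T n Q n])
  also have "\<dots> = mtrace (T * Q * P)"
    using c by (intro mtrace_mult_commute) auto
  also have "T * Q * P = T"
    using c QP by (simp add: assoc_mult_mat[of T n n Q n P n])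
  finally show ?thesis .
qed

lemma similar_mat_wit_unitary_conj:
  assumes "U \<in> carrier_mat n n" "unitary_mat U" "X \<in> carrier_mat n n"
  shows "similar_mat_wit (U * X * mat_adjoint U) X U (mat_adjoint U)"
  using assms by (intro similar_mat_witI[of _ _ n]) (auto simp: unitary_mat_def)

lemma hermitian_mat_cnj_index:
  assumes "hermitian_mat A" "A \<in> carrier_mat n n" "i < n" "j < n"
  shows "cnj (A $$ (i, j)) = A $$ (j, i)"
  using assms mat_adjoint_index[of j A i] by (simp add: hermitian_mat_def)

lemma kron_dim [simp]:
  "dim_row (kron A B) = dim_row A * dim_row B" "dim_col (kron A B) = dim_col A * dim_col B"
  by (simp_all add: kron_def)

lemma kron_carrier:
  "A \<in> carrier_mat n n' \<Longrightarrow> B \<in> carrier_mat m m' \<Longrightarrow> kron A B \<in> carrier_mat (n * m) (n' * m')"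
  unfolding carrier_mat_def by simp

lemma kron_index:
  "i < dim_row A * dim_row B \<Longrightarrow> j < dim_col A * dim_col B \<Longrightarrow>
   kron A B $$ (i, j) = A $$ (i div dim_row B, j div dim_col B) * B $$ (i mod dim_row B, j mod dim_col B)"
  by (simp add: kron_def)

lemma kron_index_mult_add:
  assumes "A \<in> carrier_mat n n'" "B \<in> carrier_mat m m'"
    and "i < n" "j < n'" "r < m" "r' < m'"
  shows "kron A B $$ (i * m + r, j * m' + r') = A $$ (i, j) * B $$ (r, r')"
  using assms mult_add_less_mult[of i n r m] mult_add_less_mult[of j n' r' m'] by (simp add: kron_index)

lemma kron_mult:
  assumes A: "A \<in> carrier_mat n k" and C: "C \<in> carrier_mat k l"
    and B: "B \<in> carrier_mat m p" and D: "D \<in> carrier_mat p q"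
  shows "kron A B * kron C D = kron (A * C) (B * D)"
proof (rule eq_matI)
  fix i j assume "i < dim_row (kron (A * C) (B * D))" "j < dim_col (kron (A * C) (B * D))"
  then have i: "i < n * m" and j: "j < l * q" using A B C D by auto
  then have m: "0 < m" and q: "0 < q" by (auto intro: gr0I)
  have "(kron A B * kron C D) $$ (i, j) = (\<Sum>t<k * p. kron A B $$ (i, t) * kron C D $$ (t, j))"
    using A B C D i j by (simp add: scalar_prod_def lessThan_atLeast0)
  also have "\<dots> = (\<Sum>u<k. \<Sum>v<p.
      (A $$ (i div m, u) * C $$ (u, j div q)) * (B $$ (i mod m, v) * D $$ (v, j mod q)))"
    unfolding sum_lessThan_mult_nat
    using A B C D i j mult_add_less_mult[of _ k _ p] by (intro sum.cong refl) (simp add: kron_index)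
  also have "\<dots> = (A * C) $$ (i div m, j div q) * (B * D) $$ (i mod m, j mod q)"
    using A B C D i j m q
    by (simp add: scalar_prod_def lessThan_atLeast0 less_mult_imp_div_less sum_product)
  also have "\<dots> = kron (A * C) (B * D) $$ (i, j)"
    using A B C D i j by (simp add: kron_index)
  finally show "(kron A B * kron C D) $$ (i, j) = kron (A * C) (B * D) $$ (i, j)" .
qed (use A B C D in auto)

lemma kron_one: "kron (1\<^sub>m n) (1\<^sub>m m) = 1\<^sub>m (n * m)"
proof (rule eq_matI)
  fix i j assume "i < dim_row (1\<^sub>m (n * m))" "j < dim_col (1\<^sub>m (n * m))"
  then have i: "i < n * m" and j: "j < n * m" by auto
  then have "0 < m" by (auto intro: gr0I)
  moreover have "i = j \<longleftrightarrow> i div m = j div m \<and> i mod m = j mod m"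
    by (metis div_mult_mod_eq)
  ultimately show "kron (1\<^sub>m n) (1\<^sub>m m) $$ (i, j) = 1\<^sub>m (n * m) $$ (i, j)"
    using i j by (auto simp: kron_index less_mult_imp_div_less)
qed auto

lemma similar_mat_wit_kron:
  assumes "similar_mat_wit A T P Q" "similar_mat_wit B S P' Q'"
  shows "similar_mat_wit (kron A B) (kron T S) (kron P P') (kron Q Q')"
proof -
  obtain n where A: "A \<in> carrier_mat n n" "T \<in> carrier_mat n n" "P \<in> carrier_mat n n" "Q \<in> carrier_mat n n"
    and PQ: "P * Q = 1\<^sub>m n" "Q * P = 1\<^sub>m n" and eqA: "A = P * T * Q"
    using similar_mat_witD[OF refl assms(1)] by blast
  obtain m where B: "B \<in> carrier_mat m m" "S \<in> carrier_mat m m" "P' \<in> carrier_mat m m" "Q' \<in> carrier_mat m m"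
    and PQ': "P' * Q' = 1\<^sub>m m" "Q' * P' = 1\<^sub>m m" and eqB: "B = P' * S * Q'"
    using similar_mat_witD[OF refl assms(2)] by blast
  have "kron A B = kron P P' * kron T S * kron Q Q'"
    using A B by (simp add: eqA eqB kron_mult[of _ n n _ n _ m m _ m])
  then show ?thesis
    using A B PQ PQ'
    by (intro similar_mat_witI[of _ _ "n * m"] kron_carrier) (auto simp: kron_mult kron_one)
qed

lemma upper_triangular_kron:
  assumes T: "T \<in> carrier_mat n n" and S: "S \<in> carrier_mat m m"
    and "upper_triangular T" "upper_triangular S"
  shows "upper_triangular (kron T S)"
proof
  fix i j assume "j < i" "i < dim_row (kron T S)"
  then have i: "i < n * m" and ji: "j < i" using T S by auto
  then have m: "0 < m" by (auto intro: gr0I)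
  have "T $$ (i div m, j div m) = 0 \<or> S $$ (i mod m, j mod m) = 0"
  proof (cases "j div m = i div m")
    case True
    then have "j mod m < i mod m" using ji by (metis div_mult_mod_eq nat_add_left_cancel_less)
    then show ?thesis using upper_triangularD[OF assms(4)] S m by simp
  next
    case False
    then have "j div m < i div m" using ji by (simp add: div_le_mono le_neq_implies_less)
    then show ?thesis using assms(3) T i by (auto simp: less_mult_imp_div_less)
  qed
  then show "kron T S $$ (i, j) = 0" using i ji T S by (simp add: kron_index)
qed

section \<open>Spectra and von Neumann entropy\<close>

lemma proots_prod_linear_factors: "proots (\<Prod>a\<leftarrow>as. [:- a, 1:]) = mset (as :: complex list)"
proof (induction as)
  case (Cons a as)
  have "(\<Prod>b\<leftarrow>as. [:- b, 1:]) \<noteq> 0" by auto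
  then have "proots ([:- a, 1:] * (\<Prod>b\<leftarrow>as. [:- b, 1:])) = {#a#} + mset as"
    using Cons.IH by (subst proots_mult) auto
  then show ?case by (simp only: list.map prod_list.Cons) simp
qed simp

lemma triangularization_exists:
  assumes A: "(A :: complex mat) \<in> carrier_mat n n"
  obtains T P Q where "similar_mat_wit A T P Q" "upper_triangular T" "T \<in> carrier_mat n n"
proof -
  obtain as where "char_poly A = (\<Prod>a\<leftarrow>as. [:- a, 1:])"
    using char_poly_factorized[OF A] by blast
  moreover obtain T P Q where "schur_decomposition A as = (T, P, Q)"
    by (cases "schur_decomposition A as") auto
  ultimately have "similar_mat_wit A T P Q" "upper_triangular T"
    using schur_decomposition[OF A] by blast+
  then show ?thesis using that similar_mat_witD2(5)[OF A] by blast
qed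

lemma proots_char_poly_triangular:
  assumes "similar_mat_wit (A :: complex mat) T P Q" "upper_triangular T" "T \<in> carrier_mat n n"
  shows "proots (char_poly A) = mset (diag_mat T)"
proof -
  have "char_poly A = char_poly T"
    using assms(1) by (intro char_poly_similar) (auto simp: similar_mat_def)
  also have "\<dots> = (\<Prod>a\<leftarrow>diag_mat T. [:- a, 1:])"
    using assms(3,2) by (rule char_poly_upper_triangular)
  finally show ?thesis by (simp only: proots_prod_linear_factors)
qed

lemma diag_in_proots_char_poly:
  assumes "similar_mat_wit (A :: complex mat) T P Q" "upper_triangular T" "T \<in> carrier_mat n n" "i < n"
  shows "T $$ (i, i) \<in># proots (char_poly A)"
  using assms by (simp add: proots_char_poly_triangular[OF assms(1-3)] diag_mat_def)

lemma hermitian_eigenvalue_real: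
  assumes A: "A \<in> carrier_mat n n" and herm: "hermitian_mat A" and "eigenvalue A k"
  shows "k \<in> \<real>"
proof -
  obtain v where v: "v \<in> carrier_vec n" "v \<noteq> 0\<^sub>v n" "A *\<^sub>v v = k \<cdot>\<^sub>v v"
    using assms unfolding eigenvalue_def eigenvector_def by auto
  define s where "s = (\<Sum>i<n. \<Sum>j<n. cnj (v $ i) * A $$ (i, j) * v $ j)"
  define N where "N = (\<Sum>i<n. cnj (v $ i) * v $ i)"
  have "s = (\<Sum>i<n. cnj (v $ i) * (A *\<^sub>v v) $ i)"
    using A v(1) by (simp add: s_def scalar_prod_def lessThan_atLeast0 sum_distrib_left mult.assoc)
  also have "\<dots> = k * N"
    using v by (simp add: N_def sum_distrib_left algebra_simps)
  finally have s: "s = k * N" .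
  have "cnj s = (\<Sum>i<n. \<Sum>j<n. cnj (v $ j) * A $$ (j, i) * v $ i)"
    unfolding s_def using hermitian_mat_cnj_index[OF herm A] by (simp add: mult_ac)
  also have "\<dots> = s" unfolding s_def by (rule sum.swap)
  finally have "s \<in> \<real>" by (simp add: Reals_cnj_iff)
  have "N = v \<bullet>c v"
    using v(1) by (simp add: N_def scalar_prod_def lessThan_atLeast0 mult.commute)
  then have "N \<noteq> 0" using v(1,2) by simp
  moreover have "cnj N = N" by (simp add: N_def mult.commute)
  ultimately have "k = s / N" "N \<in> \<real>" using s by (simp_all add: Reals_cnj_iff)
  then show ?thesis using \<open>s \<in> \<real>\<close> by simp
qed

lemma hermitian_proots_char_poly_real:
  assumes "A \<in> carrier_mat n n" "hermitian_mat A"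
  shows "set_mset (proots (char_poly A)) \<subseteq> \<real>"
proof
  fix x assume "x \<in># proots (char_poly A)"
  then have "poly (char_poly A) x = 0" by (cases "char_poly A = 0") auto
  then show "x \<in> \<real>"
    using assms by (intro hermitian_eigenvalue_real) (auto simp: eigenvalue_root_char_poly)
qed

lemma vn_entropy_similar: "similar_mat A B \<Longrightarrow> vn_entropy A = vn_entropy B"
  unfolding vn_entropy_def by (simp only: char_poly_similar)

lemma vn_entropy_unitary_conj:
  assumes "U \<in> carrier_mat n n" "unitary_mat U" "X \<in> carrier_mat n n"
  shows "vn_entropy (U * X * mat_adjoint U) = vn_entropy X"
  using similar_mat_wit_unitary_conj[OF assms] by (intro vn_entropy_similar) (auto simp: similar_mat_def)

lemma vn_entropy_triangular:
  assumes "similar_mat_wit A T P Q" "upper_triangular T" "T \<in> carrier_mat n n"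
  shows "vn_entropy A = - (\<Sum>i<n. Re (T $$ (i, i)) * ln (Re (T $$ (i, i))))"
  using assms(3)
  by (simp add: vn_entropy_def proots_char_poly_triangular[OF assms] diag_mat_def lessThan_atLeast0
      sum_unfold_sum_mset multiset.map_comp o_def)

(* Since ln x = ln |x| for real x (and ln 0 = 0), this holds for all reals; hence only real,
   not nonnegative, spectra are needed below. *)
lemma mult_ln_mult: "(x * y) * ln (x * y) = y * (x * ln x) + x * (y * ln (y :: real))"
proof (cases "x = 0 \<or> y = 0")
  case False
  then show ?thesis by (simp add: ln_mult distrib_left mult_ac)
qed auto

lemma sum_mult_ln_mult:
  fixes t s :: "nat \<Rightarrow> real"
  shows "(\<Sum>i<n. \<Sum>r<m. (t i * s r) * ln (t i * s r))
    = (\<Sum>r<m. s r) * (\<Sum>i<n. t i * ln (t i)) + (\<Sum>i<n. t i) * (\<Sum>r<m. s r * ln (s r))"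
  unfolding mult_ln_mult sum.distrib sum_product by (simp only: sum.swap[of _ "{..<m}"])

lemma vn_entropy_kron:
  assumes A: "A \<in> carrier_mat n n" and B: "B \<in> carrier_mat m m"
    and realA: "set_mset (proots (char_poly A)) \<subseteq> \<real>"
    and realB: "set_mset (proots (char_poly B)) \<subseteq> \<real>"
  shows "vn_entropy (kron A B) = Re (mtrace B) * vn_entropy A + Re (mtrace A) * vn_entropy B"
proof -
  obtain T P Q where T: "similar_mat_wit A T P Q" "upper_triangular T" "T \<in> carrier_mat n n"
    using triangularization_exists[OF A] .
  obtain S P' Q' where S: "similar_mat_wit B S P' Q'" "upper_triangular S" "S \<in> carrier_mat m m"
    using triangularization_exists[OF B] .
  define t where "t i = Re (T $$ (i, i))" for i
  define s where "s r = Re (S $$ (r, r))" for r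
  have T_diag: "T $$ (i, i) = of_real (t i)" if "i < n" for i
    using realA diag_in_proots_char_poly[OF T that] by (auto simp: t_def elim!: Reals_cases)
  have S_diag: "S $$ (r, r) = of_real (s r)" if "r < m" for r
    using realB diag_in_proots_char_poly[OF S that] by (auto simp: s_def elim!: Reals_cases)
  have "Re (mtrace T) = (\<Sum>i<n. t i)" "Re (mtrace S) = (\<Sum>r<m. s r)"
    using T(3) S(3) by (simp_all add: mtrace_def t_def s_def)
  then have trA: "Re (mtrace A) = (\<Sum>i<n. t i)" and trB: "Re (mtrace B) = (\<Sum>r<m. s r)"
    by (simp_all add: mtrace_similar[OF T(1)] mtrace_similar[OF S(1)])
  have "vn_entropy (kron A B) = - (\<Sum>k<n * m. Re (kron T S $$ (k, k)) * ln (Re (kron T S $$ (k, k))))"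
    by (rule vn_entropy_triangular[OF similar_mat_wit_kron[OF T(1) S(1)]
          upper_triangular_kron[OF T(3) S(3) T(2) S(2)] kron_carrier[OF T(3) S(3)]])
  also have "\<dots> = - (\<Sum>i<n. \<Sum>r<m. (t i * s r) * ln (t i * s r))"
    unfolding sum_lessThan_mult_nat
  proof (intro arg_cong[where f = uminus] sum.cong refl)
    fix i r assume "i \<in> {..<n}" "r \<in> {..<m}"
    then have "Re (kron T S $$ (i * m + r, i * m + r)) = t i * s r"
      using T(3) S(3) T_diag S_diag by (simp add: kron_index_mult_add)
    then show "Re (kron T S $$ (i * m + r, i * m + r)) * ln (Re (kron T S $$ (i * m + r, i * m + r)))
        = t i * s r * ln (t i * s r)" by simp
  qed
  also have "\<dots> = - ((\<Sum>r<m. s r) * (\<Sum>i<n. t i * ln (t i)) + (\<Sum>i<n. t i) * (\<Sum>r<m. s r * ln (s r)))"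
    by (simp only: sum_mult_ln_mult)
  also have "\<dots> = Re (mtrace B) * vn_entropy A + Re (mtrace A) * vn_entropy B"
    unfolding trA trB vn_entropy_triangular[OF T] vn_entropy_triangular[OF S] t_def s_def by simp
  finally show ?thesis .
qed

section \<open>The matrix exponential and the Gibbs state\<close>

lemma upper_triangular_mult:
  assumes A: "A \<in> carrier_mat n n" and B: "B \<in> carrier_mat n n"
    and uA: "upper_triangular A" and uB: "upper_triangular B"
  shows "upper_triangular (A * B)"
    and "i < n \<Longrightarrow> (A * B) $$ (i, i) = A $$ (i, i) * B $$ (i, i)"
proof -
  have zero: "A $$ (i, l) * B $$ (l, j) = 0" if "i < n" "l < n" "l < i \<or> j < l" for i j l
    using that upper_triangularD[OF uA] upper_triangularD[OF uB] A B by auto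
  have entry: "(A * B) $$ (i, j) = (\<Sum>l<n. A $$ (i, l) * B $$ (l, j))" if "i < n" "j < n" for i j
    using A B that by (rule mult_mat_index_sum)
  show "upper_triangular (A * B)"
  proof
    fix i j assume "j < i" "i < dim_row (A * B)"
    then show "(A * B) $$ (i, j) = 0" using A by (auto simp: entry intro!: sum.neutral zero)
  qed
  assume i: "i < n"
  have "A $$ (i, l) * B $$ (l, i) = 0" if "l < n" "l \<noteq> i" for l
    using zero[of i l i] i that by (auto simp: nat_neq_iff)
  then have "(\<Sum>l<n. A $$ (i, l) * B $$ (l, i)) = (\<Sum>l\<in>{i}. A $$ (i, l) * B $$ (l, i))"
    using i by (intro sum.mono_neutral_cong_right) auto
  then show "(A * B) $$ (i, i) = A $$ (i, i) * B $$ (i, i)" using i by (simp add: entry)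
qed

lemma upper_triangular_power:
  assumes T: "T \<in> carrier_mat n n" and "upper_triangular T"
  shows "upper_triangular (T ^\<^sub>m k) \<and> (\<forall>i<n. (T ^\<^sub>m k) $$ (i, i) = T $$ (i, i) ^ k)"
proof (induction k)
  case (Suc k)
  then show ?case
    using upper_triangular_mult[of "T ^\<^sub>m k" n T] T assms(2) by (simp add: power_Suc2 del: power_Suc)
qed (use T in auto)

lemma norm_power_mat_index_le:
  assumes X: "X \<in> carrier_mat n n" and "i < n" "j < n"
  shows "cmod ((X ^\<^sub>m k) $$ (i, j)) \<le> (\<Sum>a<n. \<Sum>b<n. cmod (X $$ (a, b))) ^ k"
  using assms(2,3)
proof (induction k arbitrary: j)
  case 0
  then show ?case using X by (cases "i = j") auto
next
  case (Suc k)
  define K where "K = (\<Sum>a<n. \<Sum>b<n. cmod (X $$ (a, b)))"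
  have "cmod ((X ^\<^sub>m Suc k) $$ (i, j)) = cmod (\<Sum>l<n. (X ^\<^sub>m k) $$ (i, l) * X $$ (l, j))"
    using X Suc.prems by (simp add: scalar_prod_def lessThan_atLeast0)
  also have "\<dots> \<le> (\<Sum>l<n. K ^ k * cmod (X $$ (l, j)))"
    using Suc by (intro sum_norm_le) (auto simp: norm_mult K_def intro!: mult_right_mono)
  also have "\<dots> = K ^ k * (\<Sum>l<n. \<Sum>b\<in>{j}. cmod (X $$ (l, b)))"
    by (simp add: sum_distrib_left)
  also have "\<dots> \<le> K ^ k * K"
    unfolding K_def using Suc.prems by (intro mult_left_mono sum_mono sum_mono2 zero_le_power sum_nonneg) auto
  finally show ?case by (simp add: K_def mult.commute)
qed

lemma summable_exp_mat_series:
  assumes "(X :: complex mat) \<in> carrier_mat n n" "i < n" "j < n"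
  shows "summable (\<lambda>k. (X ^\<^sub>m k) $$ (i, j) / of_nat (fact k))"
proof -
  let ?K = "\<Sum>a<n. \<Sum>b<n. cmod (X $$ (a, b))"
  show ?thesis
  proof (rule summable_comparison_test'[where g = "\<lambda>k. inverse (fact k) * ?K ^ k" and N = 0])
    show "summable (\<lambda>k. inverse (fact k) * ?K ^ k)" by (rule summable_exp)
    fix k
    have "norm ((X ^\<^sub>m k) $$ (i, j) / of_nat (fact k)) = cmod ((X ^\<^sub>m k) $$ (i, j)) / fact k"
      by (simp add: norm_divide)
    also have "\<dots> \<le> ?K ^ k / fact k"
      using norm_power_mat_index_le[OF assms] by (rule divide_right_mono) simp
    finally show "norm ((X ^\<^sub>m k) $$ (i, j) / of_nat (fact k)) \<le> inverse (fact k) * ?K ^ k"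
      by (simp add: divide_inverse mult.commute)
  qed
qed

lemma exp_mat_sums:
  assumes "(X :: complex mat) \<in> carrier_mat n n" "i < n" "j < n"
  shows "(\<lambda>k. (X ^\<^sub>m k) $$ (i, j) / of_nat (fact k)) sums exp_mat X $$ (i, j)"
  using summable_sums[OF summable_exp_mat_series[OF assms]] assms by (simp add: exp_mat_def)

lemma power_similar:
  assumes "P \<in> carrier_mat n n" "X \<in> carrier_mat n n" "Q \<in> carrier_mat n n"
    and "P * Q = 1\<^sub>m n" "Q * P = 1\<^sub>m n"
  shows "(P * X * Q) ^\<^sub>m k = P * X ^\<^sub>m k * Q"
proof (induction k)
  case (Suc k)
  have "(P * X * Q) ^\<^sub>m Suc k = P * X ^\<^sub>m k * Q * (P * X * Q)"
    using Suc by simp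
  also have "\<dots> = P * X ^\<^sub>m k * (Q * P) * X * Q"
    using assms(1-3) by (simp add: assoc_mult_mat[of _ n n _ n _ n] mult_carrier_mat[of _ n n _ n])
  also have "\<dots> = P * X ^\<^sub>m Suc k * Q"
    using assms by (simp add: assoc_mult_mat[of _ n n _ n _ n] mult_carrier_mat[of _ n n _ n])
  finally show ?case .
qed (use assms in simp)

lemma similar_mat_wit_exp_mat:
  assumes "similar_mat_wit A T P Q"
  shows "similar_mat_wit (exp_mat A) (exp_mat T) P Q"
proof -
  obtain n where c: "A \<in> carrier_mat n n" "T \<in> carrier_mat n n" "P \<in> carrier_mat n n" "Q \<in> carrier_mat n n"
    and inv: "P * Q = 1\<^sub>m n" "Q * P = 1\<^sub>m n" and A: "A = P * T * Q"
    using similar_mat_witD[OF refl assms] by blast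
  have E: "exp_mat T \<in> carrier_mat n n" using c by (simp add: exp_mat_def)
  have "exp_mat A = P * exp_mat T * Q"
  proof (rule eq_matI)
    fix i j assume "i < dim_row (P * exp_mat T * Q)" "j < dim_col (P * exp_mat T * Q)"
    then have ij: "i < n" "j < n" using c by auto
    have "(\<lambda>k. \<Sum>a<n. \<Sum>b<n. P $$ (i, a) * ((T ^\<^sub>m k) $$ (a, b) / of_nat (fact k)) * Q $$ (b, j))
        sums (\<Sum>a<n. \<Sum>b<n. P $$ (i, a) * exp_mat T $$ (a, b) * Q $$ (b, j))"
      using c by (intro sums_sum sums_mult sums_mult2 exp_mat_sums) auto
    moreover have "(\<Sum>a<n. \<Sum>b<n. P $$ (i, a) * ((T ^\<^sub>m k) $$ (a, b) / of_nat (fact k)) * Q $$ (b, j))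
        = (A ^\<^sub>m k) $$ (i, j) / of_nat (fact k)" for k
      unfolding A power_similar[OF c(3,2,4) inv] triple_mult_index[OF c(3) pow_carrier_mat[OF c(2)] c(4) ij]
      by (simp add: sum_divide_distrib)
    ultimately have "(\<lambda>k. (A ^\<^sub>m k) $$ (i, j) / of_nat (fact k)) sums (P * exp_mat T * Q) $$ (i, j)"
      unfolding triple_mult_index[OF c(3) E c(4) ij] by simp
    then show "exp_mat A $$ (i, j) = (P * exp_mat T * Q) $$ (i, j)"
      using exp_mat_sums[OF c(1) ij] sums_unique2 by blast
  qed (use c A in \<open>auto simp: exp_mat_def\<close>)
  then show ?thesis using c E inv by (intro similar_mat_witI[of _ _ n]) auto
qed

lemma exp_mat_upper_triangular:
  assumes T: "T \<in> carrier_mat n n" and uT: "upper_triangular T"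
  shows "upper_triangular (exp_mat T)" and "i < n \<Longrightarrow> exp_mat T $$ (i, i) = exp (T $$ (i, i))"
proof -
  show "upper_triangular (exp_mat T)"
  proof
    fix i j assume ji: "j < i" and i: "i < dim_row (exp_mat T)"
    have "(T ^\<^sub>m k) $$ (i, j) = 0" for k
      using upper_triangular_power[OF T uT, of k] ji i T by (auto simp: exp_mat_def)
    then show "exp_mat T $$ (i, j) = 0"
      using ji i T by (simp add: exp_mat_def)
  qed
  assume i: "i < n"
  have "(\<lambda>k. T $$ (i, i) ^ k / of_nat (fact k)) sums exp (T $$ (i, i))"
    using exp_converges[of "T $$ (i, i)"] by (simp add: scaleR_conv_of_real divide_inverse mult.commute)
  then show "exp_mat T $$ (i, i) = exp (T $$ (i, i))"
    using exp_mat_sums[OF T i i] upper_triangular_power[OF T uT] i by (simp add: sums_unique2)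
qed

lemma exp_mat_hermitian_triangularization:
  assumes H: "H \<in> carrier_mat n n" and herm: "hermitian_mat H"
  obtains E P Q w where "similar_mat_wit (exp_mat (complex_of_real t \<cdot>\<^sub>m H)) E P Q"
    "upper_triangular E" "E \<in> carrier_mat n n"
    "\<And>i. i < n \<Longrightarrow> E $$ (i, i) = of_real (w i)" "\<And>i. 0 < w i"
proof -
  obtain S P Q where S: "similar_mat_wit H S P Q" "upper_triangular S" "S \<in> carrier_mat n n"
    using triangularization_exists[OF H] .
  let ?tS = "complex_of_real t \<cdot>\<^sub>m S"
  have tS: "?tS \<in> carrier_mat n n" "upper_triangular ?tS"
    using S(2,3) by (auto simp: upper_triangular_def)
  have "S $$ (i, i) \<in> \<real>" if "i < n" for i
    using hermitian_proots_char_poly_real[OF H herm] diag_in_proots_char_poly[OF S that] by blast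
  then have "exp_mat ?tS $$ (i, i) = of_real (exp (t * Re (S $$ (i, i))))" if "i < n" for i
    using exp_mat_upper_triangular(2)[OF tS that] that S(3)
    by (auto elim!: Reals_cases simp flip: exp_of_real)
  moreover have "exp_mat ?tS \<in> carrier_mat n n" "upper_triangular (exp_mat ?tS)"
    using exp_mat_upper_triangular(1)[OF tS] tS(1) by (auto simp: exp_mat_def)
  ultimately show ?thesis
    using that[OF similar_mat_wit_exp_mat[OF similar_mat_wit_smult[OF S(1)]]] by simp
qed

lemma gibbs_state_triangularization:
  assumes H: "H \<in> carrier_mat n n" and herm: "hermitian_mat H" and n: "0 < n"
  obtains T P Q where "similar_mat_wit (gibbs_state \<beta> H) T P Q" "upper_triangular T"
    "T \<in> carrier_mat n n" "\<forall>i<n. T $$ (i, i) \<in> \<real>" "(\<Sum>i<n. T $$ (i, i)) = 1"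
proof -
  obtain E P Q w where E: "similar_mat_wit (exp_mat (complex_of_real (- \<beta>) \<cdot>\<^sub>m H)) E P Q"
    "upper_triangular E" "E \<in> carrier_mat n n"
    and E_diag: "\<And>i. i < n \<Longrightarrow> E $$ (i, i) = of_real (w i)" and w: "\<And>i. 0 < w i"
    using exp_mat_hermitian_triangularization[OF H herm, where t = "- \<beta>"] by blast
  define Z where "Z = (\<Sum>i<n. w i)"
  have Z: "0 < Z" using n w by (auto simp: Z_def intro!: sum_pos)
  have "mtrace (exp_mat (complex_of_real (- \<beta>) \<cdot>\<^sub>m H)) = of_real Z"
    using mtrace_similar[OF E(1)] E(3) E_diag by (simp add: mtrace_def Z_def)
  define T where "T = (1 / of_real Z) \<cdot>\<^sub>m E"
  have "similar_mat_wit (gibbs_state \<beta> H) T P Q"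
    using similar_mat_wit_smult[OF E(1), of "1 / of_real Z"] \<open>mtrace _ = of_real Z\<close>
    by (simp add: gibbs_state_def T_def)
  moreover have "upper_triangular T" "T \<in> carrier_mat n n"
    using E by (auto simp: T_def upper_triangular_def)
  moreover have diag: "T $$ (i, i) = of_real (w i / Z)" if "i < n" for i
    using E(3) E_diag that by (simp add: T_def)
  then have "\<forall>i<n. T $$ (i, i) \<in> \<real>" by simp
  moreover have "(\<Sum>i<n. T $$ (i, i)) = of_real (\<Sum>i<n. w i / Z)"
    using diag by (simp add: of_real_sum)
  then have "(\<Sum>i<n. T $$ (i, i)) = 1"
    using Z by (simp add: Z_def flip: sum_divide_distrib)
  ultimately show ?thesis using that by blast
qed

lemma gibbs_state_carrier: "H \<in> carrier_mat n n \<Longrightarrow> gibbs_state \<beta> H \<in> carrier_mat n n"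
  by (simp add: gibbs_state_def exp_mat_def)

lemma gibbs_state_proots_char_poly_real:
  assumes "H \<in> carrier_mat n n" "hermitian_mat H" "0 < n"
  shows "set_mset (proots (char_poly (gibbs_state \<beta> H))) \<subseteq> \<real>"
proof -
  obtain T P Q where T: "similar_mat_wit (gibbs_state \<beta> H) T P Q" "upper_triangular T"
    "T \<in> carrier_mat n n" and real: "\<forall>i<n. T $$ (i, i) \<in> \<real>"
    using gibbs_state_triangularization[OF assms] .
  then show ?thesis by (auto simp: proots_char_poly_triangular[OF T] diag_mat_def)
qed

lemma mtrace_gibbs_state:
  assumes "H \<in> carrier_mat n n" "hermitian_mat H" "0 < n"
  shows "mtrace (gibbs_state \<beta> H) = 1"
proof -
  obtain T P Q where T: "similar_mat_wit (gibbs_state \<beta> H) T P Q"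
    "T \<in> carrier_mat n n" "(\<Sum>i<n. T $$ (i, i)) = 1"
    using gibbs_state_triangularization[OF assms] by metis
  have "mtrace (gibbs_state \<beta> H) = mtrace T" by (rule mtrace_similar[OF T(1)])
  then show ?thesis using T(2,3) by (simp add: mtrace_def)
qed

section \<open>Operators acting on S and R only\<close>

(* Index of |s,m,r> in S (x) M (x) R (dimensions a, b, c), where k is the index of |s,r> in S (x) R. *)
definition insert_M :: "nat \<Rightarrow> nat \<Rightarrow> nat \<Rightarrow> nat \<Rightarrow> nat" where
  "insert_M b c m k = (k div c) * (b * c) + m * c + k mod c"

lemma insert_M_nested: "insert_M b c m k = ((k div c) * b + m) * c + k mod c"
  by (simp add: insert_M_def algebra_simps)

lemma insert_M_mult_add: "r < c \<Longrightarrow> insert_M b c m (s * c + r) = s * (b * c) + m * c + r"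
  by (simp add: insert_M_def)

lemma insert_M_div_mod:
  assumes "m < b" "0 < c"
  shows "(insert_M b c m k div c) mod b = m"
    and "(insert_M b c m k div (b * c)) * c + insert_M b c m k mod c = k"
proof -
  have d: "insert_M b c m k div c = (k div c) * b + m"
    using assms(2) by (simp add: insert_M_nested)
  then show "(insert_M b c m k div c) mod b = m" using assms(1) by simp
  have "insert_M b c m k div (b * c) = k div c"
    using assms(1) by (simp add: div_mult2_eq[of _ c b, simplified mult.commute[of c b]] d)
  then show "(insert_M b c m k div (b * c)) * c + insert_M b c m k mod c = k"
    using assms(2) by (simp add: insert_M_nested)
qed

lemma insert_M_less:
  assumes "m < b" "k < a * c"
  shows "insert_M b c m k < a * b * c"
proof -
  have "0 < c" using assms(2) by (cases "c = 0") auto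
  then have "(k div c) * b + m < a * b" "k mod c < c"
    using assms by (auto intro!: mult_add_less_mult less_mult_imp_div_less)
  then show ?thesis unfolding insert_M_nested by (rule mult_add_less_mult)
qed

lemma insert_M_inj:
  assumes "m < b" "k < a * c" "m' < b" "k' < a * c"
  shows "insert_M b c m k = insert_M b c m' k' \<longleftrightarrow> m = m' \<and> k = k'"
proof
  assume eq: "insert_M b c m k = insert_M b c m' k'"
  have "0 < c" using assms(2) by (cases "c = 0") auto
  then show "m = m' \<and> k = k'"
    using insert_M_div_mod[OF assms(1), of c k] insert_M_div_mod[OF assms(3), of c k'] eq by metis
qed simp

lemma insert_M_cases:
  assumes "i < a * b * c"
  obtains m k where "m < b" "k < a * c" "i = insert_M b c m k"
proof -
  have "0 < b" "0 < c" using assms by (cases "b = 0"; cases "c = 0"; auto)+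
  have "i div (b * c) < a" using assms by (simp add: less_mult_imp_div_less mult.assoc)
  then have "(i div (b * c)) * c + i mod c < a * c"
    using \<open>0 < c\<close> by (simp add: mult_add_less_mult)
  moreover have "insert_M b c ((i div c) mod b) ((i div (b * c)) * c + i mod c)
      = ((i div c) div b * b + (i div c) mod b) * c + i mod c"
    using \<open>0 < c\<close> by (simp add: insert_M_nested div_mult2_eq[of _ c b, simplified mult.commute[of c b]])
  ultimately show ?thesis
    using that[of "(i div c) mod b" "(i div (b * c)) * c + i mod c"] \<open>0 < b\<close> by simp
qed

lemma sum_insert_M: "(\<Sum>i<a * b * c. f i) = (\<Sum>m<b. \<Sum>k<a * c. f (insert_M b c m k))"
proof -
  have "bij_betw (\<lambda>(m, k). insert_M b c m k) ({..<b} \<times> {..<a * c}) {..<a * b * c}"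
    by (rule bij_betwI') (auto simp: insert_M_inj insert_M_less elim!: insert_M_cases)
  then show ?thesis
    by (simp add: sum.reindex_bij_betw[symmetric] sum.cartesian_product prod.case_distrib)
qed

lemma ext_SR_carrier: "ext_SR a b c U \<in> carrier_mat (a * b * c) (a * b * c)"
  unfolding carrier_mat_def by (simp add: ext_SR_def)

(* The block <m| X |m'> of an operator X on S (x) M (x) R, an operator on S (x) R. *)
definition block_M :: "nat \<Rightarrow> nat \<Rightarrow> nat \<Rightarrow> complex mat \<Rightarrow> nat \<Rightarrow> nat \<Rightarrow> complex mat" where
  "block_M a b c X m m' = mat (a * c) (a * c) (\<lambda>(k, k'). X $$ (insert_M b c m k, insert_M b c m' k'))"

lemma block_M_dim [simp]:
  "dim_row (block_M a b c X m m') = a * c" "dim_col (block_M a b c X m m') = a * c"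
  by (simp_all add: block_M_def)

lemma block_M_carrier: "block_M a b c X m m' \<in> carrier_mat (a * c) (a * c)"
  by (rule carrier_matI) simp_all

lemma block_M_index [simp]:
  "k < a * c \<Longrightarrow> k' < a * c \<Longrightarrow>
   block_M a b c X m m' $$ (k, k') = X $$ (insert_M b c m k, insert_M b c m' k')"
  by (simp add: block_M_def)

lemma eq_mat_by_block_M:
  assumes "X \<in> carrier_mat (a * b * c) (a * b * c)" "Y \<in> carrier_mat (a * b * c) (a * b * c)"
    and "\<And>m m'. m < b \<Longrightarrow> m' < b \<Longrightarrow> block_M a b c X m m' = block_M a b c Y m m'"
  shows "X = Y"
proof (rule eq_matI)
  fix i j assume "i < dim_row Y" "j < dim_col Y"
  then have "i < a * b * c" "j < a * b * c" using assms(2) by auto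
  obtain m k where "m < b" "k < a * c" "i = insert_M b c m k"
    using insert_M_cases[OF \<open>i < a * b * c\<close>] .
  moreover obtain m' k' where "m' < b" "k' < a * c" "j = insert_M b c m' k'"
    using insert_M_cases[OF \<open>j < a * b * c\<close>] .
  ultimately show "X $$ (i, j) = Y $$ (i, j)"
    using arg_cong[OF assms(3), of m m' "\<lambda>B. B $$ (k, k')"] by simp
qed (use assms in auto)

lemma ext_SR_index_insert_M:
  assumes "m < b" "k < a * c" "m' < b" "k' < a * c"
  shows "ext_SR a b c U $$ (insert_M b c m k, insert_M b c m' k') = (if m = m' then U $$ (k, k') else 0)"
proof -
  have "0 < c" using assms(2) by (cases "c = 0") auto
  then show ?thesis
    using assms insert_M_less[OF assms(1,2)] insert_M_less[OF assms(3,4)]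
    by (simp add: ext_SR_def insert_M_div_mod)
qed

lemma block_M_ext_SR:
  assumes "U \<in> carrier_mat (a * c) (a * c)" "m < b" "m' < b"
  shows "block_M a b c (ext_SR a b c U) m m' = (if m = m' then U else 0\<^sub>m (a * c) (a * c))"
  by (rule eq_matI) (use assms in \<open>auto simp: ext_SR_index_insert_M\<close>)

lemma block_M_one:
  assumes "m < b" "m' < b"
  shows "block_M a b c (1\<^sub>m (a * b * c)) m m' = (if m = m' then 1\<^sub>m (a * c) else 0\<^sub>m (a * c) (a * c))"
  by (rule eq_matI) (use assms in \<open>auto simp: insert_M_less insert_M_inj\<close>)

lemma block_M_adjoint:
  assumes "X \<in> carrier_mat (a * b * c) (a * b * c)" "m < b" "m' < b"
  shows "block_M a b c (mat_adjoint X) m m' = mat_adjoint (block_M a b c X m' m)"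
  by (rule eq_matI) (use assms in \<open>auto simp: insert_M_less\<close>)

lemma block_M_mult_index:
  assumes Y: "Y \<in> carrier_mat (a * b * c) (a * b * c)" and Z: "Z \<in> carrier_mat (a * b * c) (a * b * c)"
    and "m < b" "m' < b" and k: "k < a * c" "k' < a * c"
  shows "block_M a b c (Y * Z) m m' $$ (k, k')
    = (\<Sum>m''<b. (block_M a b c Y m m'' * block_M a b c Z m'' m') $$ (k, k'))"
proof -
  have "block_M a b c (Y * Z) m m' $$ (k, k') = (Y * Z) $$ (insert_M b c m k, insert_M b c m' k')"
    using k by simp
  also have "\<dots> = (\<Sum>i<a * b * c. Y $$ (insert_M b c m k, i) * Z $$ (i, insert_M b c m' k'))"
    using assms by (intro mult_mat_index_sum[OF Y Z] insert_M_less)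
  also have "\<dots> = (\<Sum>m''<b. \<Sum>k''<a * c. Y $$ (insert_M b c m k, insert_M b c m'' k'')
      * Z $$ (insert_M b c m'' k'', insert_M b c m' k'))"
    by (rule sum_insert_M)
  also have "\<dots> = (\<Sum>m''<b. (block_M a b c Y m m'' * block_M a b c Z m'' m') $$ (k, k'))"
    by (intro sum.cong refl, subst mult_mat_index_sum[OF block_M_carrier block_M_carrier k],
        intro sum.cong refl) (use k in simp)
  finally show ?thesis .
qed

lemma block_M_ext_SR_mult:
  assumes U: "U \<in> carrier_mat (a * c) (a * c)" and Y: "Y \<in> carrier_mat (a * b * c) (a * b * c)"
    and m: "m < b" "m' < b"
  shows "block_M a b c (ext_SR a b c U * Y) m m' = U * block_M a b c Y m m'"
proof (rule eq_matI)
  fix k k' assume "k < dim_row (U * block_M a b c Y m m')" "k' < dim_col (U * block_M a b c Y m m')"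
  then have k: "k < a * c" "k' < a * c" using U by auto
  have W: "ext_SR a b c U \<in> carrier_mat (a * b * c) (a * b * c)" by (rule ext_SR_carrier)
  have "(block_M a b c (ext_SR a b c U) m m'' * block_M a b c Y m'' m') $$ (k, k')
      = (if m'' = m then (U * block_M a b c Y m m') $$ (k, k') else 0)" if "m'' < b" for m''
    using U k m that by (cases "m'' = m") (simp_all add: block_M_ext_SR del: index_mult_mat)
  then show "block_M a b c (ext_SR a b c U * Y) m m' $$ (k, k') = (U * block_M a b c Y m m') $$ (k, k')"
    unfolding block_M_mult_index[OF W Y m k] using m by (simp del: index_mult_mat)
qed (use U in auto)

lemma block_M_mult_ext_SR:
  assumes U: "U \<in> carrier_mat (a * c) (a * c)" and Y: "Y \<in> carrier_mat (a * b * c) (a * b * c)"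
    and m: "m < b" "m' < b"
  shows "block_M a b c (Y * ext_SR a b c U) m m' = block_M a b c Y m m' * U"
proof (rule eq_matI)
  fix k k' assume "k < dim_row (block_M a b c Y m m' * U)" "k' < dim_col (block_M a b c Y m m' * U)"
  then have k: "k < a * c" "k' < a * c" using U by auto
  have W: "ext_SR a b c U \<in> carrier_mat (a * b * c) (a * b * c)" by (rule ext_SR_carrier)
  have "(block_M a b c Y m m'' * block_M a b c (ext_SR a b c U) m'' m') $$ (k, k')
      = (if m'' = m' then (block_M a b c Y m m' * U) $$ (k, k') else 0)" if "m'' < b" for m''
    using U k m that by (cases "m'' = m'") (simp_all add: block_M_ext_SR del: index_mult_mat)
  then show "block_M a b c (Y * ext_SR a b c U) m m' $$ (k, k') = (block_M a b c Y m m' * U) $$ (k, k')"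
    unfolding block_M_mult_index[OF Y W m k] using m by (simp del: index_mult_mat)
qed (use U in auto)

lemma ext_SR_adjoint:
  assumes U: "U \<in> carrier_mat (a * c) (a * c)"
  shows "mat_adjoint (ext_SR a b c U) = ext_SR a b c (mat_adjoint U)"
proof (rule eq_mat_by_block_M)
  have W: "ext_SR a b c U \<in> carrier_mat (a * b * c) (a * b * c)" by (rule ext_SR_carrier)
  then show "mat_adjoint (ext_SR a b c U) \<in> carrier_mat (a * b * c) (a * b * c)"
    by (rule mat_adjoint_carrier)
  show "ext_SR a b c (mat_adjoint U) \<in> carrier_mat (a * b * c) (a * b * c)" by (rule ext_SR_carrier)
  fix m m' assume m: "m < b" "m' < b"
  have "mat_adjoint (0\<^sub>m (a * c) (a * c)) = (0\<^sub>m (a * c) (a * c) :: complex mat)"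
    by (rule eq_matI) auto
  then show "block_M a b c (mat_adjoint (ext_SR a b c U)) m m' = block_M a b c (ext_SR a b c (mat_adjoint U)) m m'"
    using U m mat_adjoint_carrier[OF U] by (simp add: block_M_adjoint[OF W] block_M_ext_SR)
qed

lemma unitary_ext_SR:
  assumes U: "U \<in> carrier_mat (a * c) (a * c)" and "unitary_mat U"
  shows "unitary_mat (ext_SR a b c U)"
proof -
  have W: "ext_SR a b c U \<in> carrier_mat (a * b * c) (a * b * c)" by (rule ext_SR_carrier)
  have W': "ext_SR a b c (mat_adjoint U) \<in> carrier_mat (a * b * c) (a * b * c)" by (rule ext_SR_carrier)
  have UU: "U * mat_adjoint U = 1\<^sub>m (a * c)" using assms by (simp add: unitary_mat_def)
  have "ext_SR a b c U * ext_SR a b c (mat_adjoint U) = 1\<^sub>m (a * b * c)"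
  proof (rule eq_mat_by_block_M)
    fix m m' assume m: "m < b" "m' < b"
    show "block_M a b c (ext_SR a b c U * ext_SR a b c (mat_adjoint U)) m m'
        = block_M a b c (1\<^sub>m (a * b * c)) m m'"
      using U m UU mat_adjoint_carrier[OF U]
      by (simp add: block_M_ext_SR_mult[OF U W'] block_M_ext_SR block_M_one)
  qed (use W W' in auto)
  then show ?thesis
    using W W' mat_mult_left_right_inverse[OF W W'] by (simp add: unitary_mat_def ext_SR_adjoint[OF U])
qed

lemma block_M_conj_ext_SR:
  assumes U: "U \<in> carrier_mat (a * c) (a * c)" and X: "X \<in> carrier_mat (a * b * c) (a * b * c)"
    and "m < b" "m' < b"
  shows "block_M a b c (ext_SR a b c U * X * mat_adjoint (ext_SR a b c U)) m m'
    = U * block_M a b c X m m' * mat_adjoint U"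
proof -
  have "ext_SR a b c U * X \<in> carrier_mat (a * b * c) (a * b * c)"
    using ext_SR_carrier X by (rule mult_carrier_mat)
  then show ?thesis
    using assms mat_adjoint_carrier[OF U]
    by (simp add: ext_SR_adjoint[OF U] block_M_mult_ext_SR block_M_ext_SR_mult)
qed

lemma red_SR_dim [simp]: "dim_row (red_SR a b c X) = a * c" "dim_col (red_SR a b c X) = a * c"
  by (simp_all add: red_SR_def)

lemma red_M_dim [simp]: "dim_row (red_M a b c X) = b" "dim_col (red_M a b c X) = b"
  by (simp_all add: red_M_def)

lemma red_M_index_block_M:
  assumes "m < b" "m' < b"
  shows "red_M a b c X $$ (m, m') = mtrace (block_M a b c X m m')"
  using assms by (simp add: red_M_def mtrace_def sum_lessThan_mult_nat insert_M_mult_add)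

lemma red_SR_index_block_M:
  assumes "k < a * c" "k' < a * c"
  shows "red_SR a b c X $$ (k, k') = (\<Sum>m<b. block_M a b c X m m $$ (k, k'))"
  using assms by (simp add: red_SR_def insert_M_def)

lemma red_M_conj_ext_SR:
  assumes U: "U \<in> carrier_mat (a * c) (a * c)" "unitary_mat U"
    and X: "X \<in> carrier_mat (a * b * c) (a * b * c)"
  shows "red_M a b c (ext_SR a b c U * X * mat_adjoint (ext_SR a b c U)) = red_M a b c X"
proof (rule eq_matI)
  fix m m' assume "m < dim_row (red_M a b c X)" "m' < dim_col (red_M a b c X)"
  then have m: "m < b" "m' < b" by simp_all
  have "mtrace (U * block_M a b c X m m' * mat_adjoint U) = mtrace (block_M a b c X m m')"
    by (rule mtrace_similar[OF similar_mat_wit_unitary_conj[OF U block_M_carrier]])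
  then show "red_M a b c (ext_SR a b c U * X * mat_adjoint (ext_SR a b c U)) $$ (m, m')
      = red_M a b c X $$ (m, m')"
    using m by (simp add: red_M_index_block_M block_M_conj_ext_SR[OF U(1) X])
qed simp_all

lemma red_SR_conj_ext_SR:
  assumes U: "U \<in> carrier_mat (a * c) (a * c)" and X: "X \<in> carrier_mat (a * b * c) (a * b * c)"
  shows "red_SR a b c (ext_SR a b c U * X * mat_adjoint (ext_SR a b c U))
    = U * red_SR a b c X * mat_adjoint U"
proof (rule eq_matI)
  fix k k' assume "k < dim_row (U * red_SR a b c X * mat_adjoint U)"
    and "k' < dim_col (U * red_SR a b c X * mat_adjoint U)"
  then have k: "k < a * c" "k' < a * c" using U by auto
  have R: "red_SR a b c X \<in> carrier_mat (a * c) (a * c)" by (rule carrier_matI) simp_all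
  have V: "mat_adjoint U \<in> carrier_mat (a * c) (a * c)" using U by (rule mat_adjoint_carrier)
  define f where "f m k1 k2 = U $$ (k, k1) * block_M a b c X m m $$ (k1, k2) * mat_adjoint U $$ (k2, k')"
    for m k1 k2
  have "red_SR a b c (ext_SR a b c U * X * mat_adjoint (ext_SR a b c U)) $$ (k, k')
      = (\<Sum>m<b. (U * block_M a b c X m m * mat_adjoint U) $$ (k, k'))"
    unfolding red_SR_index_block_M[OF k]
    by (intro sum.cong refl) (simp only: block_M_conj_ext_SR[OF U X] lessThan_iff)
  also have "\<dots> = (\<Sum>m<b. \<Sum>k1<a * c. \<Sum>k2<a * c. f m k1 k2)"
    unfolding f_def by (simp only: triple_mult_index[OF U block_M_carrier V k])
  also have "\<dots> = (\<Sum>k1<a * c. \<Sum>k2<a * c. \<Sum>m<b. f m k1 k2)"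
    by (simp only: sum.swap[of _ "{..<b}"])
  also have "\<dots> = (\<Sum>k1<a * c. \<Sum>k2<a * c.
      U $$ (k, k1) * red_SR a b c X $$ (k1, k2) * mat_adjoint U $$ (k2, k'))"
    by (intro sum.cong refl) (simp add: f_def red_SR_index_block_M sum_distrib_left sum_distrib_right)
  also have "\<dots> = (U * red_SR a b c X * mat_adjoint U) $$ (k, k')"
    by (simp only: triple_mult_index[OF U R V k])
  finally show "red_SR a b c (ext_SR a b c U * X * mat_adjoint (ext_SR a b c U)) $$ (k, k')
      = (U * red_SR a b c X * mat_adjoint U) $$ (k, k')" .
qed (use U in simp_all)

section \<open>Partial traces of product states\<close>

definition ptrace_snd :: "nat \<Rightarrow> nat \<Rightarrow> complex mat \<Rightarrow> complex mat" where
  "ptrace_snd a b \<rho> = mat a a (\<lambda>(s, s'). \<Sum>m<b. \<rho> $$ (s * b + m, s' * b + m))"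

lemma ptrace_snd_carrier: "ptrace_snd a b \<rho> \<in> carrier_mat a a"
  by (rule carrier_matI) (simp_all add: ptrace_snd_def)

lemma hermitian_ptrace_snd:
  assumes herm: "hermitian_mat \<rho>" and \<rho>: "\<rho> \<in> carrier_mat (a * b) (a * b)"
  shows "hermitian_mat (ptrace_snd a b \<rho>)"
  unfolding hermitian_mat_def
proof (intro conjI eq_matI)
  fix s s' assume "s < dim_row (ptrace_snd a b \<rho>)" "s' < dim_col (ptrace_snd a b \<rho>)"
  then have s: "s < a" "s' < a" by (simp_all add: ptrace_snd_def)
  have "cnj (\<rho> $$ (s' * b + m, s * b + m)) = \<rho> $$ (s * b + m, s' * b + m)" if "m < b" for m
    using s that by (intro hermitian_mat_cnj_index[OF herm \<rho>]) (auto intro: mult_add_less_mult)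
  then show "mat_adjoint (ptrace_snd a b \<rho>) $$ (s, s') = ptrace_snd a b \<rho> $$ (s, s')"
    using s by (simp add: ptrace_snd_def)
qed (simp_all add: ptrace_snd_def)

lemma mtrace_ptrace_snd:
  assumes "\<rho> \<in> carrier_mat (a * b) (a * b)"
  shows "mtrace (ptrace_snd a b \<rho>) = mtrace \<rho>"
  using assms by (simp add: mtrace_def ptrace_snd_def sum_lessThan_mult_nat)

lemma red_SM_kron:
  assumes \<rho>: "\<rho> \<in> carrier_mat (a * b) (a * b)" and R: "R \<in> carrier_mat c c"
  shows "red_SM a b c (kron \<rho> R) = mtrace R \<cdot>\<^sub>m \<rho>"
proof (rule eq_matI)
  fix i j assume "i < dim_row (mtrace R \<cdot>\<^sub>m \<rho>)" "j < dim_col (mtrace R \<cdot>\<^sub>m \<rho>)"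
  then have ij: "i < a * b" "j < a * b" using \<rho> by auto
  have "red_SM a b c (kron \<rho> R) $$ (i, j) = (\<Sum>r<c. kron \<rho> R $$ (i * c + r, j * c + r))"
    using ij by (simp add: red_SM_def)
  also have "\<dots> = (\<Sum>r<c. \<rho> $$ (i, j) * R $$ (r, r))"
    using ij by (intro sum.cong refl) (simp add: kron_index_mult_add[OF \<rho> R])
  also have "\<dots> = (mtrace R \<cdot>\<^sub>m \<rho>) $$ (i, j)"
    using ij \<rho> R by (simp add: mtrace_def sum_distrib_left mult.commute)
  finally show "red_SM a b c (kron \<rho> R) $$ (i, j) = (mtrace R \<cdot>\<^sub>m \<rho>) $$ (i, j)" .
qed (use \<rho> in \<open>simp_all add: red_SM_def\<close>)

lemma red_S_kron:
  assumes \<rho>: "\<rho> \<in> carrier_mat (a * b) (a * b)" and R: "R \<in> carrier_mat c c"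
  shows "red_S a b c (kron \<rho> R) = mtrace R \<cdot>\<^sub>m ptrace_snd a b \<rho>"
proof (rule eq_matI)
  fix s s' assume "s < dim_row (mtrace R \<cdot>\<^sub>m ptrace_snd a b \<rho>)"
    and "s' < dim_col (mtrace R \<cdot>\<^sub>m ptrace_snd a b \<rho>)"
  then have s: "s < a" "s' < a" by (simp_all add: ptrace_snd_def)
  have "red_S a b c (kron \<rho> R) $$ (s, s')
      = (\<Sum>m<b. \<Sum>r<c. kron \<rho> R $$ ((s * b + m) * c + r, (s' * b + m) * c + r))"
    using s by (simp add: red_S_def sum_lessThan_mult_nat algebra_simps)
  also have "\<dots> = (\<Sum>m<b. \<Sum>r<c. \<rho> $$ (s * b + m, s' * b + m) * R $$ (r, r))"
    using s by (intro sum.cong refl) (simp add: kron_index_mult_add[OF \<rho> R] mult_add_less_mult)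
  also have "\<dots> = (mtrace R \<cdot>\<^sub>m ptrace_snd a b \<rho>) $$ (s, s')"
    using s R by (simp add: ptrace_snd_def mtrace_def sum_distrib_left sum_distrib_right mult.commute)
  finally show "red_S a b c (kron \<rho> R) $$ (s, s') = (mtrace R \<cdot>\<^sub>m ptrace_snd a b \<rho>) $$ (s, s')" .
qed (simp_all add: red_S_def ptrace_snd_def)

lemma red_SR_kron:
  assumes \<rho>: "\<rho> \<in> carrier_mat (a * b) (a * b)" and R: "R \<in> carrier_mat c c"
  shows "red_SR a b c (kron \<rho> R) = kron (ptrace_snd a b \<rho>) R"
proof (rule eq_matI)
  fix i j assume "i < dim_row (kron (ptrace_snd a b \<rho>) R)" "j < dim_col (kron (ptrace_snd a b \<rho>) R)"
  then have ij: "i < a * c" "j < a * c" using R by (simp_all add: ptrace_snd_def)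
  then have c: "0 < c" by (cases "c = 0") auto
  have div: "i div c < a" "j div c < a" using ij by (simp_all add: less_mult_imp_div_less)
  have "red_SR a b c (kron \<rho> R) $$ (i, j) = (\<Sum>m<b. kron \<rho> R
      $$ (((i div c) * b + m) * c + i mod c, ((j div c) * b + m) * c + j mod c))"
    using ij by (simp add: red_SR_def algebra_simps)
  also have "\<dots> = (\<Sum>m<b. \<rho> $$ ((i div c) * b + m, (j div c) * b + m) * R $$ (i mod c, j mod c))"
    using div c by (intro sum.cong refl) (simp add: kron_index_mult_add[OF \<rho> R] mult_add_less_mult)
  also have "\<dots> = kron (ptrace_snd a b \<rho>) R $$ (i, j)"
    using ij div R by (simp add: kron_index ptrace_snd_def sum_distrib_right)
  finally show "red_SR a b c (kron \<rho> R) $$ (i, j) = kron (ptrace_snd a b \<rho>) R $$ (i, j)" .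
qed (use R in \<open>simp_all add: ptrace_snd_def\<close>)

lemma entropies_after_SR_unitary:
  assumes \<rho>: "\<rho> \<in> carrier_mat (a * b) (a * b)" "hermitian_mat \<rho>" "mtrace \<rho> = 1"
    and R: "R \<in> carrier_mat c c" "set_mset (proots (char_poly R)) \<subseteq> \<real>" "mtrace R = 1"
    and U: "U \<in> carrier_mat (a * c) (a * c)" "unitary_mat U"
  defines "\<rho>i \<equiv> kron \<rho> R"
    and "\<rho>f \<equiv> ext_SR a b c U * kron \<rho> R * mat_adjoint (ext_SR a b c U)"
  shows "red_M a b c \<rho>f = red_M a b c \<rho>i" and "red_SM a b c \<rho>i = \<rho>"
    and "vn_entropy \<rho>f = vn_entropy \<rho> + vn_entropy R"
    and "vn_entropy (red_SR a b c \<rho>f) = vn_entropy (red_S a b c \<rho>i) + vn_entropy R"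
proof -
  define \<rho>S where "\<rho>S = ptrace_snd a b \<rho>"
  have \<rho>S: "\<rho>S \<in> carrier_mat a a" "hermitian_mat \<rho>S" "mtrace \<rho>S = 1"
    unfolding \<rho>S_def using \<rho>
    by (auto intro: ptrace_snd_carrier hermitian_ptrace_snd simp: mtrace_ptrace_snd)
  have \<rho>i: "\<rho>i \<in> carrier_mat (a * b * c) (a * b * c)"
    unfolding \<rho>i_def using kron_carrier[OF \<rho>(1) R(1)] .
  show "red_M a b c \<rho>f = red_M a b c \<rho>i"
    unfolding \<rho>f_def \<rho>i_def[symmetric] using U \<rho>i by (rule red_M_conj_ext_SR)
  show "red_SM a b c \<rho>i = \<rho>"
    using \<rho>(1) R by (simp add: \<rho>i_def red_SM_kron)
  have "vn_entropy \<rho>f = vn_entropy \<rho>i"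
    unfolding \<rho>f_def \<rho>i_def[symmetric]
    by (rule vn_entropy_unitary_conj[OF ext_SR_carrier unitary_ext_SR[OF U] \<rho>i])
  then show "vn_entropy \<rho>f = vn_entropy \<rho> + vn_entropy R"
    using \<rho> R by (simp add: \<rho>i_def vn_entropy_kron hermitian_proots_char_poly_real)
  have "red_SR a b c \<rho>f = U * kron \<rho>S R * mat_adjoint U"
    unfolding \<rho>f_def \<rho>i_def[symmetric] red_SR_conj_ext_SR[OF U(1) \<rho>i]
    by (simp add: \<rho>i_def \<rho>S_def red_SR_kron[OF \<rho>(1) R(1)])
  then have "vn_entropy (red_SR a b c \<rho>f) = vn_entropy \<rho>S + vn_entropy R"
    using \<rho>S R by (simp add: vn_entropy_unitary_conj[OF U kron_carrier[OF \<rho>S(1) R(1)]]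
        vn_entropy_kron hermitian_proots_char_poly_real)
  moreover have "red_S a b c \<rho>i = \<rho>S"
    using \<rho>(1) R by (simp add: \<rho>i_def \<rho>S_def red_S_kron)
  ultimately show "vn_entropy (red_SR a b c \<rho>f) = vn_entropy (red_S a b c \<rho>i) + vn_entropy R"
    by simp
qed

theorem theorem3:
  fixes dS dM dR :: nat and \<rho>SM H U :: "complex mat" and \<beta> :: real
  assumes "0 < dS" and "0 < dM" and "0 < dR"
    and "density_op (dS * dM) \<rho>SM"
    and "H \<in> carrier_mat dR dR" and "hermitian_mat H"
    and "0 < \<beta>"
    and "U \<in> carrier_mat (dS * dR) (dS * dR)" and "unitary_mat U"
  shows
    "let \<rho>iR = gibbs_state \<beta> H;
         \<rho>i = kron \<rho>SM \<rho>iR;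
         W = ext_SR dS dM dR U;
         \<rho>f = W * \<rho>i * mat_adjoint W;
         QR = Re (mtrace ((red_R dS dM dR \<rho>f - red_R dS dM dR \<rho>i) * H));
         \<Sigma>S = vn_entropy (red_S dS dM dR \<rho>f) - vn_entropy (red_S dS dM dR \<rho>i) + \<beta> * QR;
         condS = (\<lambda>\<rho>. vn_entropy (red_SM dS dM dR \<rho>) - vn_entropy (red_M dS dM dR \<rho>));
         \<Sigma>SM = condS \<rho>f - condS \<rho>i + \<beta> * QR;
         \<Sigma>I = \<Sigma>SM - \<Sigma>S
     in \<Sigma>I = vn_entropy (red_SR dS dM dR \<rho>f) + vn_entropy (red_SM dS dM dR \<rho>f)
              - vn_entropy (red_S dS dM dR \<rho>f) - vn_entropy \<rho>f"
proof -
  have \<rho>SM: "\<rho>SM \<in> carrier_mat (dS * dM) (dS * dM)" "hermitian_mat \<rho>SM" "mtrace \<rho>SM = 1"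
    using assms(4) by (auto simp: density_op_def psd_mat_def)
  have R: "gibbs_state \<beta> H \<in> carrier_mat dR dR"
    "set_mset (proots (char_poly (gibbs_state \<beta> H))) \<subseteq> \<real>" "mtrace (gibbs_state \<beta> H) = 1"
    using gibbs_state_carrier[OF assms(5)] gibbs_state_proots_char_poly_real[OF assms(5,6,3)]
      mtrace_gibbs_state[OF assms(5,6,3)] by auto
  show ?thesis
    using entropies_after_SR_unitary[OF \<rho>SM R assms(8,9)] by (simp add: Let_def)
qed

end
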